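(* Let $\nu$ be a continuous valuation on a topological space $X$ such that $\mathrm{Val}(\nu)=\{\nu(U):U\in\mathcal OX,\ \nu(U)\neq0,+\infty\}$ has a least element $r$. Then there is an irreducible closed subset $C$ of $X$ such that (1) $\nu'=\nu-r\,e_C$ is a continuous valuation, and (2) $\mathrm{Val}(\nu')\subseteq\{v-r:v\in\mathrm{Val}(\nu),\ v\neq r\}$.
   Context: A continuous valuation is a map $\nu:\mathcal OX\to[0,\infty]$ with $\nu(\emptyset)=0$, monotone, modular, preserving directed suprema of opens. A non-empty subset is irreducible if it is not contained in a union of two closed sets without being contained in one of them. For irreducible closed $C$, $e_C(U)=1$ if $U\cap C\neq\emptyset$ and $0$ otherwise. The difference $\nu-r\,e_C$ is pointwise, with $+\infty-r=+\infty$. *)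

theory Defs
  imports "HOL-Analysis.Analysis" "HOL-Library.Extended_Nonnegative_Real"
begin

text \<open>Valuations take values in [0,\<infinity>] = ennreal; they are functions on all sets,
  but only their values on open sets of the topology matter.\<close>

definition directed_open_family :: "'a topology \<Rightarrow> 'a set set \<Rightarrow> bool" where
  "directed_open_family T D \<longleftrightarrow>
     D \<noteq> {} \<and> (\<forall>U\<in>D. openin T U) \<and> (\<forall>U\<in>D. \<forall>V\<in>D. \<exists>W\<in>D. U \<union> V \<subseteq> W)"

definition continuous_valuation :: "'a topology \<Rightarrow> ('a set \<Rightarrow> ennreal) \<Rightarrow> bool" where
  "continuous_valuation T \<nu> \<longleftrightarrow>
     \<nu> {} = 0 \<and>
     (\<forall>U V. openin T U \<and> openin T V \<and> U \<subseteq> V \<longrightarrow> \<nu> U \<le> \<nu> V) \<and>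
     (\<forall>U V. openin T U \<and> openin T V \<longrightarrow> \<nu> U + \<nu> V = \<nu> (U \<union> V) + \<nu> (U \<inter> V)) \<and>
     (\<forall>D. directed_open_family T D \<longrightarrow> \<nu> (\<Union>D) = (SUP U\<in>D. \<nu> U))"

definition Val :: "'a topology \<Rightarrow> ('a set \<Rightarrow> ennreal) \<Rightarrow> ennreal set" where
  "Val T \<nu> = {\<nu> U | U. openin T U \<and> \<nu> U \<noteq> 0 \<and> \<nu> U \<noteq> \<infinity>}"

definition irreducible_set :: "'a topology \<Rightarrow> 'a set \<Rightarrow> bool" where
  "irreducible_set T C \<longleftrightarrow> C \<noteq> {} \<and> C \<subseteq> topspace T \<and>
     (\<forall>A B. closedin T A \<and> closedin T B \<and> C \<subseteq> A \<union> B \<longrightarrow> C \<subseteq> A \<or> C \<subseteq> B)"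

definition point_val :: "'a set \<Rightarrow> 'a set \<Rightarrow> ennreal" where
  "point_val C U = (if U \<inter> C \<noteq> {} then 1 else 0)"

text \<open>Pointwise difference; ennreal subtraction satisfies \<infinity> - r = \<infinity> for finite r.
  (It truncates at 0, so the statement separately asserts r e_C \<le> \<nu> on opens.)\<close>
definition val_diff :: "('a set \<Rightarrow> ennreal) \<Rightarrow> ennreal \<Rightarrow> 'a set \<Rightarrow> 'a set \<Rightarrow> ennreal" where
  "val_diff \<nu> r C U = \<nu> U - r * point_val C U"

end

theory Submission
  imports Defs
begin

text \<open>Pick an open U0 with \<nu> U0 = r. By minimality of r, the restriction
  \<mu> U = \<nu> (U \<inter> U0) takes only the values 0 and r on opens, so \<mu> = r e_C where C is the
  support of \<mu>, the complement of the largest \<mu>-null open (which exists by Scott continuity);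
  modularity of the two-valued \<mu> makes C irreducible. Modularity of \<nu> against U0 gives
  \<nu> U - \<mu> U = \<nu> (U \<union> U0) - r, and U \<mapsto> \<nu> (U \<union> U0) is a continuous valuation
  bounded below by the finite constant r, so subtracting r keeps it one; its finite nonzero
  values are v - r for the values v = \<nu> (U \<union> U0) \<noteq> r of \<nu>.\<close>

lemma ennreal_minus_add_minus_eq:
  fixes a b c d r :: ennreal
  assumes "r \<le> a" "r \<le> b" "r \<le> c" "r \<le> d" "r \<noteq> \<infinity>" and "a + b = c + d"
  shows "(a - r) + (b - r) = (c - r) + (d - r)"
proof -
  have split: "(x - r) + (y - r) + (r + r) = x + y" if "r \<le> x" "r \<le> y" for x y :: ennreal
    using that by (metis add.assoc add.left_commute diff_add_cancel_ennreal)
  have "(a - r) + (b - r) + (r + r) = (c - r) + (d - r) + (r + r)"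
    using assms by (simp add: split)
  then show ?thesis
    using assms(5) by (metis add.commute ennreal_add_eq_top ennreal_add_left_cancel)
qed

lemma ennreal_add_eq_imp_minus_eq:
  fixes a b c d :: ennreal
  assumes "d \<le> a" "a + b = c + d" "d \<noteq> \<infinity>" "b \<noteq> \<infinity>"
  shows "a - d = c - b"
proof -
  have "(a - d) + b + d = ((a - d) + d) + b"
    by (simp only: ac_simps)
  also have "\<dots> = c + d"
    using assms(2) by (simp only: diff_add_cancel_ennreal[OF assms(1)])
  finally have "(a - d) + b + d - d = c + d - d"
    by (rule arg_cong)
  then have "(a - d) + b = c"
    using assms(3) by simp
  then show ?thesis
    using assms(4) by auto
qed

lemma
  assumes "continuous_valuation T \<nu>"
  shows continuous_valuation_empty: "\<nu> {} = 0"
    and continuous_valuation_mono: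
      "openin T U \<Longrightarrow> openin T V \<Longrightarrow> U \<subseteq> V \<Longrightarrow> \<nu> U \<le> \<nu> V"
    and continuous_valuation_modular:
      "openin T U \<Longrightarrow> openin T V \<Longrightarrow> \<nu> U + \<nu> V = \<nu> (U \<union> V) + \<nu> (U \<inter> V)"
    and continuous_valuation_directed_Union:
      "directed_open_family T D \<Longrightarrow> \<nu> (\<Union>D) = (SUP U\<in>D. \<nu> U)"
  using assms unfolding continuous_valuation_def by auto

lemma directed_open_family_image:
  assumes "directed_open_family T D" "\<And>U. openin T U \<Longrightarrow> openin T (f U)" "mono f"
  shows "directed_open_family T (f ` D)"
  using assms unfolding directed_open_family_def
  by (simp add: le_supI monoD) (meson le_sup_iff monoD)

lemma continuous_valuation_cong:
  assumes "\<And>U. openin T U \<Longrightarrow> \<mu> U = \<nu> U"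
  shows "continuous_valuation T \<mu> \<longleftrightarrow> continuous_valuation T \<nu>"
proof -
  have "(SUP U\<in>D. \<mu> U) = (SUP U\<in>D. \<nu> U)" "\<mu> (\<Union>D) = \<nu> (\<Union>D)"
    if "directed_open_family T D" for D
    using that assms unfolding directed_open_family_def by (auto intro!: SUP_cong)
  then show ?thesis
    using assms unfolding continuous_valuation_def by (auto simp: openin_Un openin_Int)
qed

lemma Val_cong:
  assumes "\<And>U. openin T U \<Longrightarrow> \<mu> U = \<nu> U"
  shows "Val T \<mu> = Val T \<nu>"
  using assms unfolding Val_def by metis

lemma continuous_valuation_restrict:
  assumes \<nu>: "continuous_valuation T \<nu>" and U0: "openin T U0"
  shows "continuous_valuation T (\<lambda>U. \<nu> (U \<inter> U0))"
  unfolding continuous_valuation_def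
proof (intro conjI allI impI)
  show "\<nu> ({} \<inter> U0) = 0"
    using continuous_valuation_empty[OF \<nu>] by simp
next
  fix U V assume "openin T U \<and> openin T V \<and> U \<subseteq> V"
  then show "\<nu> (U \<inter> U0) \<le> \<nu> (V \<inter> U0)"
    using U0 by (auto intro: continuous_valuation_mono[OF \<nu>])
next
  fix U V assume "openin T U \<and> openin T V"
  then have "\<nu> (U \<inter> U0) + \<nu> (V \<inter> U0)
      = \<nu> ((U \<inter> U0) \<union> (V \<inter> U0)) + \<nu> ((U \<inter> U0) \<inter> (V \<inter> U0))"
    using U0 by (auto intro: continuous_valuation_modular[OF \<nu>])
  also have "\<dots> = \<nu> ((U \<union> V) \<inter> U0) + \<nu> ((U \<inter> V) \<inter> U0)"
    by (simp add: Int_Un_distrib2 Int_left_commute inf_assoc)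
  finally show "\<nu> (U \<inter> U0) + \<nu> (V \<inter> U0) = \<nu> ((U \<union> V) \<inter> U0) + \<nu> ((U \<inter> V) \<inter> U0)" .
next
  fix D assume "directed_open_family T D"
  then have "directed_open_family T ((\<lambda>U. U \<inter> U0) ` D)"
    using U0 by (intro directed_open_family_image) (auto simp: mono_def)
  then have "\<nu> (\<Union>((\<lambda>U. U \<inter> U0) ` D)) = (SUP X\<in>(\<lambda>U. U \<inter> U0) ` D. \<nu> X)"
    by (rule continuous_valuation_directed_Union[OF \<nu>])
  moreover have "\<Union>((\<lambda>U. U \<inter> U0) ` D) = \<Union>D \<inter> U0"
    by blast
  ultimately show "\<nu> (\<Union>D \<inter> U0) = (SUP U\<in>D. \<nu> (U \<inter> U0))"
    by (metis image_image)
qed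

lemma continuous_valuation_Un_minus:
  assumes \<nu>: "continuous_valuation T \<nu>" and U0: "openin T U0" and fin: "\<nu> U0 \<noteq> \<infinity>"
  shows "continuous_valuation T (\<lambda>U. \<nu> (U \<union> U0) - \<nu> U0)"
  unfolding continuous_valuation_def
proof (intro conjI allI impI)
  show "\<nu> ({} \<union> U0) - \<nu> U0 = 0"
    using fin by simp
next
  fix U V assume "openin T U \<and> openin T V \<and> U \<subseteq> V"
  then show "\<nu> (U \<union> U0) - \<nu> U0 \<le> \<nu> (V \<union> U0) - \<nu> U0"
    using U0 by (auto intro: ennreal_minus_mono continuous_valuation_mono[OF \<nu>])
next
  fix U V assume UV: "openin T U \<and> openin T V"
  have "\<nu> (U \<union> U0) + \<nu> (V \<union> U0)
      = \<nu> ((U \<union> U0) \<union> (V \<union> U0)) + \<nu> ((U \<union> U0) \<inter> (V \<union> U0))"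
    using UV U0 by (auto intro: continuous_valuation_modular[OF \<nu>])
  also have "\<dots> = \<nu> ((U \<union> V) \<union> U0) + \<nu> ((U \<inter> V) \<union> U0)"
    by (simp add: Un_Int_distrib2 Un_left_commute sup_assoc)
  finally have "\<nu> (U \<union> U0) + \<nu> (V \<union> U0) = \<nu> ((U \<union> V) \<union> U0) + \<nu> ((U \<inter> V) \<union> U0)" .
  moreover have "\<nu> U0 \<le> \<nu> (X \<union> U0)" if "openin T X" for X
    using that U0 by (intro continuous_valuation_mono[OF \<nu>]) auto
  ultimately show "(\<nu> (U \<union> U0) - \<nu> U0) + (\<nu> (V \<union> U0) - \<nu> U0)
      = (\<nu> ((U \<union> V) \<union> U0) - \<nu> U0) + (\<nu> ((U \<inter> V) \<union> U0) - \<nu> U0)"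
    using UV fin by (intro ennreal_minus_add_minus_eq) auto
next
  fix D assume D: "directed_open_family T D"
  then have "directed_open_family T ((\<lambda>U. U \<union> U0) ` D)"
    using U0 by (intro directed_open_family_image) (auto simp: mono_def)
  then have "\<nu> (\<Union>((\<lambda>U. U \<union> U0) ` D)) = (SUP X\<in>(\<lambda>U. U \<union> U0) ` D. \<nu> X)"
    by (rule continuous_valuation_directed_Union[OF \<nu>])
  moreover have "\<Union>((\<lambda>U. U \<union> U0) ` D) = \<Union>D \<union> U0"
    using D unfolding directed_open_family_def by blast
  ultimately show "\<nu> (\<Union>D \<union> U0) - \<nu> U0 = (SUP U\<in>D. \<nu> (U \<union> U0) - \<nu> U0)"
    using fin by (simp add: image_image SUP_diff_ennreal less_top)
qed

lemma continuous_valuation_diff_Int_eq: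
  assumes \<nu>: "continuous_valuation T \<nu>" and U: "openin T U" and U0: "openin T U0"
    and fin: "\<nu> U0 \<noteq> \<infinity>"
  shows "\<nu> U - \<nu> (U \<inter> U0) = \<nu> (U \<union> U0) - \<nu> U0"
proof -
  have "\<nu> (U \<inter> U0) \<le> \<nu> U" "\<nu> (U \<inter> U0) \<le> \<nu> U0"
    using U U0 by (auto intro: continuous_valuation_mono[OF \<nu>])
  moreover have "\<nu> (U \<inter> U0) \<noteq> \<infinity>"
    using \<open>\<nu> (U \<inter> U0) \<le> \<nu> U0\<close> fin by (auto simp: top_unique)
  ultimately show ?thesis
    using fin continuous_valuation_modular[OF \<nu> U U0] by (intro ennreal_add_eq_imp_minus_eq)
qed

lemma Val_Un_minus_subset:
  assumes "openin T U0"
  shows "Val T (\<lambda>U. \<nu> (U \<union> U0) - c) \<subseteq> {v - c | v. v \<in> Val T \<nu> \<and> v \<noteq> c}"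
proof
  fix x assume "x \<in> Val T (\<lambda>U. \<nu> (U \<union> U0) - c)"
  then obtain U where U: "openin T U" and x: "x = \<nu> (U \<union> U0) - c" "x \<noteq> 0" "x \<noteq> \<infinity>"
    unfolding Val_def by blast
  then have "\<nu> (U \<union> U0) \<in> Val T \<nu>" "\<nu> (U \<union> U0) \<noteq> c"
    using assms unfolding Val_def by auto
  with x show "x \<in> {v - c | v. v \<in> Val T \<nu> \<and> v \<noteq> c}"
    by blast
qed

definition val_support :: "'a topology \<Rightarrow> ('a set \<Rightarrow> ennreal) \<Rightarrow> 'a set" where
  "val_support T \<mu> = topspace T - \<Union>{U. openin T U \<and> \<mu> U = 0}"

lemma closedin_val_support: "closedin T (val_support T \<mu>)"
  unfolding val_support_def by (intro closedin_diff closedin_topspace) auto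

lemma continuous_valuation_Union_null:
  assumes \<mu>: "continuous_valuation T \<mu>"
  shows "\<mu> (\<Union>{U. openin T U \<and> \<mu> U = 0}) = 0"
proof -
  let ?N = "{U. openin T U \<and> \<mu> U = 0}"
  have "\<mu> (U \<union> V) = 0" if "U \<in> ?N" "V \<in> ?N" for U V
    using that continuous_valuation_modular[OF \<mu>, of U V] by auto
  then have "directed_open_family T ?N"
    unfolding directed_open_family_def
    using continuous_valuation_empty[OF \<mu>] openin_empty openin_Un by blast
  then show ?thesis
    by (simp add: continuous_valuation_directed_Union[OF \<mu>] flip: bot_ennreal)
qed

lemma val_support_meets_iff:
  assumes \<mu>: "continuous_valuation T \<mu>" and U: "openin T U"
  shows "U \<inter> val_support T \<mu> \<noteq> {} \<longleftrightarrow> \<mu> U \<noteq> 0"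
proof -
  let ?N = "\<Union>{U. openin T U \<and> \<mu> U = 0}"
  have "U \<inter> val_support T \<mu> = {} \<longleftrightarrow> U \<subseteq> ?N"
    using openin_subset[OF U] unfolding val_support_def by blast
  also have "\<dots> \<longleftrightarrow> \<mu> U = 0"
  proof
    assume "U \<subseteq> ?N"
    then have "\<mu> U \<le> \<mu> ?N"
      using U by (intro continuous_valuation_mono[OF \<mu>]) auto
    then show "\<mu> U = 0"
      by (simp add: continuous_valuation_Union_null[OF \<mu>])
  qed (use U in blast)
  finally show ?thesis
    by blast
qed

lemma two_valued_valuation_eq_point_val:
  assumes \<mu>: "continuous_valuation T \<mu>" and two_valued: "\<And>U. openin T U \<Longrightarrow> \<mu> U \<in> {0, r}"
    and U: "openin T U"
  shows "\<mu> U = r * point_val (val_support T \<mu>) U"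
  using two_valued[OF U] val_support_meets_iff[OF \<mu> U] unfolding point_val_def by auto

lemma irreducible_val_support_two_valued:
  assumes \<mu>: "continuous_valuation T \<mu>" and two_valued: "\<And>U. openin T U \<Longrightarrow> \<mu> U \<in> {0, r}"
    and fin: "r \<noteq> \<infinity>" and U0: "openin T U0" "\<mu> U0 \<noteq> 0"
  shows "irreducible_set T (val_support T \<mu>)"
  unfolding irreducible_set_def
proof (intro conjI allI impI)
  let ?C = "val_support T \<mu>"
  have r: "r \<noteq> 0"
    using two_valued[OF U0(1)] U0(2) by auto
  show "?C \<noteq> {}"
    using val_support_meets_iff[OF \<mu> U0(1)] U0(2) by blast
  show "?C \<subseteq> topspace T"
    unfolding val_support_def by blast
  fix A B assume AB: "closedin T A \<and> closedin T B \<and> ?C \<subseteq> A \<union> B"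
  show "?C \<subseteq> A \<or> ?C \<subseteq> B"
  proof (rule ccontr)
    assume "\<not> (?C \<subseteq> A \<or> ?C \<subseteq> B)"
    define U V where "U = topspace T - A" and "V = topspace T - B"
    have opens: "openin T U" "openin T V" "openin T (U \<union> V)" "openin T (U \<inter> V)"
      using AB unfolding U_def V_def by auto
    have "U \<inter> ?C \<noteq> {}" "V \<inter> ?C \<noteq> {}"
      using \<open>\<not> (?C \<subseteq> A \<or> ?C \<subseteq> B)\<close> closedin_val_support[of T \<mu>, THEN closedin_subset]
      unfolding U_def V_def by auto
    then have "\<mu> U = r" "\<mu> V = r"
      using two_valued opens val_support_meets_iff[OF \<mu>] by auto
    then have "r + r = \<mu> (U \<union> V) + \<mu> (U \<inter> V)"
      using continuous_valuation_modular[OF \<mu> opens(1,2)] by simp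
    moreover have "r + r \<noteq> r" "r + r \<noteq> 0"
      using r fin ennreal_add_left_cancel[of r r 0] by auto
    ultimately have "\<mu> (U \<inter> V) \<noteq> 0"
      using two_valued[OF opens(3)] by auto
    then have "U \<inter> V \<inter> ?C \<noteq> {}"
      using val_support_meets_iff[OF \<mu> opens(4)] by blast
    with AB show False
      unfolding U_def V_def by blast
  qed
qed

lemma continuous_valuation_Int_min_Val:
  assumes \<nu>: "continuous_valuation T \<nu>" and U0: "openin T U0"
    and min: "\<nu> U0 \<in> Val T \<nu>" "\<forall>v\<in>Val T \<nu>. \<nu> U0 \<le> v" and U: "openin T U"
  shows "\<nu> (U \<inter> U0) \<in> {0, \<nu> U0}"
proof -
  have le: "\<nu> (U \<inter> U0) \<le> \<nu> U0"
    using U U0 by (auto intro: continuous_valuation_mono[OF \<nu>])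
  have "\<nu> U0 \<le> \<nu> (U \<inter> U0)" if "\<nu> (U \<inter> U0) \<noteq> 0"
  proof -
    have "\<nu> (U \<inter> U0) \<noteq> \<infinity>"
      using le min(1) by (auto simp: Val_def top_unique)
    then have "\<nu> (U \<inter> U0) \<in> Val T \<nu>"
      using that U U0 unfolding Val_def by blast
    then show ?thesis
      using min(2) by blast
  qed
  with le show ?thesis
    by (auto intro: antisym)
qed

theorem lemma4p2:
  fixes T :: "'a topology" and \<nu> :: "'a set \<Rightarrow> ennreal" and r :: ennreal
  assumes "continuous_valuation T \<nu>"
    and "r \<in> Val T \<nu>" and "\<forall>v\<in>Val T \<nu>. r \<le> v"
  shows "\<exists>C. closedin T C \<and> irreducible_set T C \<and>
           (\<forall>U. openin T U \<longrightarrow> r * point_val C U \<le> \<nu> U) \<and>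
           continuous_valuation T (val_diff \<nu> r C) \<and>
           Val T (val_diff \<nu> r C) \<subseteq> {v - r | v. v \<in> Val T \<nu> \<and> v \<noteq> r}"
proof -
  note \<nu> = assms(1)
  obtain U0 where U0: "openin T U0" "\<nu> U0 = r" and r: "r \<noteq> 0" "r \<noteq> \<infinity>"
    using assms(2) unfolding Val_def by auto
  define \<mu> where "\<mu> U = \<nu> (U \<inter> U0)" for U
  define C where "C = val_support T \<mu>"
  have \<mu>: "continuous_valuation T \<mu>"
    unfolding \<mu>_def using \<nu> U0(1) by (rule continuous_valuation_restrict)
  have two_valued: "\<mu> U \<in> {0, r}" if "openin T U" for U
    using continuous_valuation_Int_min_Val[OF \<nu> U0(1) _ _ that] assms(2,3) U0(2)
    unfolding \<mu>_def by simp
  have point_val: "r * point_val C U = \<nu> (U \<inter> U0)" if "openin T U" for U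
    using two_valued_valuation_eq_point_val[OF \<mu> two_valued that] unfolding C_def \<mu>_def by simp
  have val_diff: "val_diff \<nu> r C U = \<nu> (U \<union> U0) - \<nu> U0" if "openin T U" for U
    using continuous_valuation_diff_Int_eq[OF \<nu> that U0(1)] point_val[OF that] U0(2) r(2)
    unfolding val_diff_def by simp
  show ?thesis
  proof (intro exI conjI allI impI)
    show "closedin T C"
      unfolding C_def by (rule closedin_val_support)
    have "\<mu> U0 \<noteq> 0"
      using U0(2) r(1) by (simp add: \<mu>_def)
    with \<mu> two_valued r(2) U0(1) show "irreducible_set T C"
      unfolding C_def by (rule irreducible_val_support_two_valued)
    show "r * point_val C U \<le> \<nu> U" if "openin T U" for U
      using point_val[OF that] that U0(1) by (auto intro: continuous_valuation_mono[OF \<nu>])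
    show "continuous_valuation T (val_diff \<nu> r C)"
      using continuous_valuation_cong[of T "val_diff \<nu> r C", OF val_diff]
        continuous_valuation_Un_minus[OF \<nu> U0(1)] U0(2) r(2)
      by simp
    show "Val T (val_diff \<nu> r C) \<subseteq> {v - r | v. v \<in> Val T \<nu> \<and> v \<noteq> r}"
      using Val_cong[of T "val_diff \<nu> r C", OF val_diff] Val_Un_minus_subset[OF U0(1), of \<nu> r] U0(2)
      by simp
  qed
qed

end
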